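(* Let $f$ be an L-additive arithmetic function whose associated completely multiplicative function $h_f$ is nonzero-valued, let $\Lambda_f$ be its generalized von Mangoldt function, and let $g$ be a completely additive arithmetic function. Then for every positive integer $n$, $$(1\ast g\Lambda_f)(n)=\sum_{d\mid n}g(d)\Lambda_f(d)=\frac{1}{2}\sum_{p^{\alpha}\parallel n}\frac{\alpha(\alpha+1)f(p)g(p)}{h_f(p)}.$$
   Context: An arithmetic function $f:\mathbb{N}\to\mathbb{C}$ is L-additive if there is a completely multiplicative function $h_f$ such that $f(mn)=f(m)h_f(n)+f(n)h_f(m)$ for all positive integers $m,n$; such an $h_f$ is fixed. $\Lambda_f(n)=\frac{f(p)}{h_f(p)}$ if $n=p^k$ for some prime $p$ and integer $k\geq1$, and $0$ otherwise. A function $g$ is completely additive if $g(mn)=g(m)+g(n)$ for all positive integers $m,n$. $1$ is the constant function $1$, $\ast$ is Dirichlet convolution, $g\Lambda_f$ is the pointwise product, and $\sum_{p^\alpha\parallel n}$ runs over the primes $p$ dividing $n$ with $\alpha$ the exact exponent of $p$ in $n$. *)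

theory Defs
  imports "HOL-Number_Theory.Number_Theory"
begin

text \<open>Arithmetic functions are modelled as functions on nat; only their values
on positive integers matter.\<close>

definition completely_multiplicative :: "(nat \<Rightarrow> complex) \<Rightarrow> bool" where
  "completely_multiplicative h \<longleftrightarrow> h 1 = 1 \<and> (\<forall>m n. m > 0 \<longrightarrow> n > 0 \<longrightarrow> h (m * n) = h m * h n)"

definition completely_additive :: "(nat \<Rightarrow> complex) \<Rightarrow> bool" where
  "completely_additive g \<longleftrightarrow> (\<forall>m n. m > 0 \<longrightarrow> n > 0 \<longrightarrow> g (m * n) = g m + g n)"

definition L_additive_with :: "(nat \<Rightarrow> complex) \<Rightarrow> (nat \<Rightarrow> complex) \<Rightarrow> bool" where
  "L_additive_with f h \<longleftrightarrow> completely_multiplicative h \<and>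
     (\<forall>m n. m > 0 \<longrightarrow> n > 0 \<longrightarrow> f (m * n) = f m * h n + f n * h m)"

definition gen_mangoldt :: "(nat \<Rightarrow> complex) \<Rightarrow> (nat \<Rightarrow> complex) \<Rightarrow> nat \<Rightarrow> complex" where
  "gen_mangoldt f h n =
     (if \<exists>p k. prime p \<and> k \<ge> 1 \<and> n = p ^ k
      then (let p = (THE p. prime p \<and> (\<exists>k\<ge>1. n = p ^ k)) in f p / h p)
      else 0)"

definition dirichlet_conv :: "(nat \<Rightarrow> complex) \<Rightarrow> (nat \<Rightarrow> complex) \<Rightarrow> nat \<Rightarrow> complex" where
  "dirichlet_conv a b n = (\<Sum>d | d dvd n. a d * b (n div d))"

end

theory Submission
  imports Defs
begin

text \<open>Since \<open>\<Lambda>\<^sub>f\<close> is supported on prime powers, the divisor sum collapses to a sum over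
  the prime powers \<open>p\<^sup>k\<close> with \<open>1 \<le> k \<le> \<alpha>\<close> for each \<open>p\<^sup>\<alpha> \<parallel> n\<close>. On these,
  \<open>g(p\<^sup>k) = k g(p)\<close> by complete additivity and \<open>\<Lambda>\<^sub>f(p\<^sup>k) = f(p)/h\<^sub>f(p)\<close>, so the inner sum is
  \<open>(1 + \<dots> + \<alpha>) f(p) g(p) / h\<^sub>f(p)\<close>.\<close>

lemma gen_mangoldt_prime_power:
  assumes "prime p" "k > 0"
  shows "gen_mangoldt f h (p ^ k) = f p / h p"
proof -
  have "(THE q. prime q \<and> (\<exists>j\<ge>1. p ^ k = q ^ j)) = p"
  proof (rule the_equality)
    show "prime p \<and> (\<exists>j\<ge>1. p ^ k = p ^ j)" using assms by (auto intro: exI[of _ k])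
  next
    fix q assume "prime q \<and> (\<exists>j\<ge>1. p ^ k = q ^ j)"
    then obtain j where "prime q" "j \<ge> 1" "p ^ k = q ^ j" by blast
    then show "q = p" using assms prime_power_inj'[of p q k j] by simp
  qed
  moreover have "\<exists>q j. prime q \<and> j \<ge> 1 \<and> p ^ k = q ^ j" using assms by (intro exI[of _ p] exI[of _ k]) simp
  ultimately show ?thesis by (simp add: gen_mangoldt_def)
qed

lemma gen_mangoldt_eq_0:
  assumes "\<not> primepow d"
  shows "gen_mangoldt f h d = 0"
proof -
  have "\<not> (\<exists>p k. prime p \<and> k \<ge> 1 \<and> d = p ^ k)"
    using assms unfolding primepow_def by (metis Suc_le_eq One_nat_def)
  then show ?thesis by (simp only: gen_mangoldt_def if_False)
qed

lemma completely_additive_power: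
  assumes "completely_additive g" "p > 0"
  shows "g (p ^ k) = of_nat k * g p"
proof (induction k)
  case 0
  have "g 1 = g 1 + g 1" using assms(1) unfolding completely_additive_def
    by (metis mult_1 zero_less_one)
  then show ?case by simp
next
  case (Suc k)
  have "g (p * p ^ k) = g p + g (p ^ k)"
    using assms unfolding completely_additive_def by simp
  with Suc show ?case by (simp add: algebra_simps)
qed

lemma dirichlet_conv_const_one_left:
  assumes "n > 0"
  shows "dirichlet_conv (\<lambda>_. 1) a n = (\<Sum>d | d dvd n. a d)"
proof -
  have "dirichlet_conv (\<lambda>_. 1) a n = (\<Sum>d | d dvd n. a (n div d))"
    by (simp add: dirichlet_conv_def)
  also have "\<dots> = (\<Sum>d | d dvd n. a d)"
    using assms by (intro sum.reindex_bij_witness[of _ "(div) n" "(div) n"]) (auto elim: dvdE)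
  finally show ?thesis .
qed

lemma sum_divisors_primepow_supported:
  fixes F :: "nat \<Rightarrow> 'a::comm_monoid_add"
  assumes "n > 0" and "\<And>d. \<not> primepow d \<Longrightarrow> F d = 0"
  shows "(\<Sum>d | d dvd n. F d) = (\<Sum>p\<in>prime_factors n. \<Sum>k\<in>{0<..multiplicity p n}. F (p ^ k))"
proof -
  let ?A = "SIGMA p:prime_factors n. {0<..multiplicity p n}"
  have "(\<Sum>d | d dvd n. F d) = (\<Sum>d\<in>primepow_factors n. F d)"
    using assms by (intro sum.mono_neutral_right) (auto simp: primepow_factors_def)
  also have "primepow_factors n = (\<lambda>(p, k). p ^ k) ` ?A"
    using assms(1) by (subst primepow_factors_altdef) fast+
  also have "(\<Sum>d\<in>(\<lambda>(p, k). p ^ k) ` ?A. F d) = (\<Sum>(p, k)\<in>?A. F (p ^ k))"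
    by (subst sum.reindex)
       (auto simp: inj_on_def prime_power_inj'' prime_factors_multiplicity case_prod_unfold)
  also have "\<dots> = (\<Sum>p\<in>prime_factors n. \<Sum>k\<in>{0<..multiplicity p n}. F (p ^ k))"
    by (rule sum.Sigma [symmetric]) auto
  finally show ?thesis .
qed

lemma sum_of_nat_greaterThanAtMost:
  "(\<Sum>k\<in>{0<..m}. of_nat k :: 'a::field_char_0) = of_nat (m * (m + 1)) / 2"
  using double_gauss_sum_from_Suc_0[of m, where 'a = 'a]
  by (simp add: atLeastSucAtMost_greaterThanAtMost field_simps)

lemma sum_prime_powers_weighted_gen_mangoldt:
  assumes "completely_additive g" "prime p"
  shows "(\<Sum>k\<in>{0<..m}. g (p ^ k) * gen_mangoldt f h (p ^ k))
           = of_nat (m * (m + 1)) * f p * g p / h p / 2"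
proof -
  have "(\<Sum>k\<in>{0<..m}. g (p ^ k) * gen_mangoldt f h (p ^ k))
          = (\<Sum>k\<in>{0<..m}. of_nat k * (g p * f p / h p))"
    using assms prime_gt_0_nat
    by (intro sum.cong refl) (simp add: gen_mangoldt_prime_power completely_additive_power)
  also have "\<dots> = (\<Sum>k\<in>{0<..m}. of_nat k) * (g p * f p / h p)"
    by (rule sum_distrib_right [symmetric])
  finally show ?thesis by (simp add: sum_of_nat_greaterThanAtMost field_simps)
qed

theorem theorem2p3:
  fixes f h g :: "nat \<Rightarrow> complex" and n :: nat
  assumes "L_additive_with f h"
    and "\<And>m. m > 0 \<Longrightarrow> h m \<noteq> 0"
    and "completely_additive g"
    and "n > 0"
  shows "dirichlet_conv (\<lambda>_. 1) (\<lambda>d. g d * gen_mangoldt f h d) n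
           = (\<Sum>d | d dvd n. g d * gen_mangoldt f h d)
       \<and> (\<Sum>d | d dvd n. g d * gen_mangoldt f h d)
           = (1/2) * (\<Sum>p\<in>prime_factors n.
                 of_nat (multiplicity p n * (multiplicity p n + 1)) * f p * g p / h p)"
proof
  show "dirichlet_conv (\<lambda>_. 1) (\<lambda>d. g d * gen_mangoldt f h d) n
          = (\<Sum>d | d dvd n. g d * gen_mangoldt f h d)"
    using assms(4) by (rule dirichlet_conv_const_one_left)
next
  have "(\<Sum>d | d dvd n. g d * gen_mangoldt f h d)
          = (\<Sum>p\<in>prime_factors n. \<Sum>k\<in>{0<..multiplicity p n}.
               g (p ^ k) * gen_mangoldt f h (p ^ k))"
    using assms(4) by (rule sum_divisors_primepow_supported) (simp add: gen_mangoldt_eq_0)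
  also have "\<dots> = (\<Sum>p\<in>prime_factors n.
                 of_nat (multiplicity p n * (multiplicity p n + 1)) * f p * g p / h p / 2)"
    using assms(3) by (intro sum.cong refl sum_prime_powers_weighted_gen_mangoldt) auto
  finally show "(\<Sum>d | d dvd n. g d * gen_mangoldt f h d)
           = (1/2) * (\<Sum>p\<in>prime_factors n.
                 of_nat (multiplicity p n * (multiplicity p n + 1)) * f p * g p / h p)"
    by (simp add: sum_divide_distrib)
qed

end
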